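(* Let $G$ be a hypomatchable graph with $|V(G)|\geq 3$, and let $(H_{1},\ldots,H_{m})$ be an odd ear decomposition of $G$ such that the sequence $(|V(H_{1})|,\ldots,|V(H_{m})|)$ is lexicographically maximum among all odd ear decompositions of $G$. Write $|V(H_{1})|=2l+1$. Then for each $i$ with $2\leq i\leq m$, $|V(Q(i))|\leq 2l$, where $Q(i)=H_{i}-\bigcup_{1\leq j\leq i-1}V(H_{j})$.
   Context: A graph $H$ is hypomatchable if $H-u$ has a perfect matching for every $u\in V(H)$. An odd ear decomposition of a graph $G$ is a sequence $(H_1,\ldots,H_m)$ of pairwise edge-disjoint subgraphs of $G$ such that: (E1) $V(G)=\bigcup_{i}V(H_i)$; (E2) each $|E(H_i)|$ is odd and at least $3$; (E3) $H_1$ is a cycle; (E4) for each $2\leq i\leq m$, either $H_i$ is a path of which exactly its two endvertices belong to $\bigcup_{j<i}V(H_j)$, or $H_i$ is a cycle with exactly one vertex in $\bigcup_{j<i}V(H_j)$. (Every hypomatchable graph of order at least $3$ has an odd ear decomposition.) For $i\geq 2$, $Q(i)=H_i-\bigcup_{j<i}V(H_j)$ is a path with an even number of vertices. *)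

theory Defs
  imports Main
begin

type_synonym 'a graph = "'a set \<times> 'a set set"

definition verts :: "'a graph \<Rightarrow> 'a set" where "verts G = fst G"
definition edges :: "'a graph \<Rightarrow> 'a set set" where "edges G = snd G"

definition graph :: "'a graph \<Rightarrow> bool" where
  "graph G \<longleftrightarrow> finite (verts G) \<and>
     (\<forall>e\<in>edges G. \<exists>u v. e = {u, v} \<and> u \<noteq> v \<and> u \<in> verts G \<and> v \<in> verts G)"

definition subgraph :: "'a graph \<Rightarrow> 'a graph \<Rightarrow> bool" where
  "subgraph H G \<longleftrightarrow> graph H \<and> verts H \<subseteq> verts G \<and> edges H \<subseteq> edges G"

definition delete_vertex :: "'a graph \<Rightarrow> 'a \<Rightarrow> 'a graph" where
  "delete_vertex G u = (verts G - {u}, {e \<in> edges G. u \<notin> e})"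

definition matching :: "'a set set \<Rightarrow> bool" where
  "matching M \<longleftrightarrow> (\<forall>e\<in>M. \<forall>f\<in>M. e \<noteq> f \<longrightarrow> e \<inter> f = {})"

definition perfect_matching :: "'a graph \<Rightarrow> 'a set set \<Rightarrow> bool" where
  "perfect_matching G M \<longleftrightarrow> M \<subseteq> edges G \<and> matching M \<and> \<Union>M = verts G"

definition hypomatchable :: "'a graph \<Rightarrow> bool" where
  "hypomatchable G \<longleftrightarrow> (\<forall>u\<in>verts G. \<exists>M. perfect_matching (delete_vertex G u) M)"

definition is_path_on :: "'a graph \<Rightarrow> 'a list \<Rightarrow> bool" where
  "is_path_on H xs \<longleftrightarrow> distinct xs \<and> length xs \<ge> 2 \<and> verts H = set xs \<and>
     edges H = {{xs ! i, xs ! Suc i} | i. Suc i < length xs}"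

definition is_path :: "'a graph \<Rightarrow> bool" where
  "is_path H \<longleftrightarrow> (\<exists>xs. is_path_on H xs)"

definition is_cycle_on :: "'a graph \<Rightarrow> 'a list \<Rightarrow> bool" where
  "is_cycle_on H xs \<longleftrightarrow> distinct xs \<and> length xs \<ge> 3 \<and> verts H = set xs \<and>
     edges H = {{xs ! i, xs ! Suc i} | i. Suc i < length xs} \<union> {{last xs, hd xs}}"

definition is_cycle :: "'a graph \<Rightarrow> bool" where
  "is_cycle H \<longleftrightarrow> (\<exists>xs. is_cycle_on H xs)"

text \<open>Vertices of the earlier ears H_1,...,H_i (0-based list: Hs!0 ... Hs!(i-1)).\<close>
definition prev_verts :: "'a graph list \<Rightarrow> nat \<Rightarrow> 'a set" where
  "prev_verts Hs i = (\<Union>j<i. verts (Hs ! j))"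

text \<open>Odd ear decomposition (E1)-(E4); the list index is 0-based, so Hs!0 is H_1.\<close>
definition odd_ear_decomposition :: "'a graph \<Rightarrow> 'a graph list \<Rightarrow> bool" where
  "odd_ear_decomposition G Hs \<longleftrightarrow>
     Hs \<noteq> [] \<and>
     (\<forall>i<length Hs. subgraph (Hs ! i) G) \<and>
     (\<forall>i<length Hs. \<forall>j<length Hs. i \<noteq> j \<longrightarrow> edges (Hs ! i) \<inter> edges (Hs ! j) = {}) \<and>
     verts G = (\<Union>i<length Hs. verts (Hs ! i)) \<and>
     (\<forall>i<length Hs. odd (card (edges (Hs ! i))) \<and> card (edges (Hs ! i)) \<ge> 3) \<and>
     is_cycle (Hs ! 0) \<and>
     (\<forall>i. 1 \<le> i \<and> i < length Hs \<longrightarrow>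
        (\<exists>xs. is_path_on (Hs ! i) xs \<and> verts (Hs ! i) \<inter> prev_verts Hs i = {hd xs, last xs}) \<or>
        (is_cycle (Hs ! i) \<and> card (verts (Hs ! i) \<inter> prev_verts Hs i) = 1))"

text \<open>Sequence of vertex counts, compared in the standard lexicographic (dictionary) order
  on lists (a proper prefix is smaller).\<close>
definition vert_seq :: "'a graph list \<Rightarrow> nat list" where
  "vert_seq Hs = map (\<lambda>H. card (verts H)) Hs"

definition lex_max_oed :: "'a graph \<Rightarrow> 'a graph list \<Rightarrow> bool" where
  "lex_max_oed G Hs \<longleftrightarrow> odd_ear_decomposition G Hs \<and>
     (\<forall>Ks. odd_ear_decomposition G Ks \<longrightarrow>
        (vert_seq Hs, vert_seq Ks) \<notin> lexord {(a, b). a < b})"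

end

theory Submission
  imports Defs
begin

text \<open>The key fact is that if \<open>H\<^sub>1, ..., H\<^sub>k\<close> is an odd ear decomposition of its
  union and \<open>P\<close> is an odd ear attached to that union, then the union together with \<open>P\<close> has an odd
  ear decomposition on the same vertices, using only its edges, whose first cycle contains \<open>P\<close>.
  This is proved by induction on \<open>k\<close>, simultaneously with the analogous statement for a single
  vertex instead of \<open>P\<close>; the induction step distinguishes where the ends of \<open>P\<close> lie with respect
  to \<open>H\<^sub>k\<close> and uses that a path joining two vertices of an odd cycle forms a new odd cycle with
  one of the two arcs between them, the other arc becoming an ear. Applied to \<open>P = H\<^sub>i\<close>, and
  keeping the later ears, this gives an odd ear decomposition of \<open>G\<close> whose first cycle has more
  than \<open>|V(Q(i))|\<close> vertices, so lexicographic maximality forces \<open>|V(Q(i))| < 2l + 1\<close>.\<close>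

section \<open>Vertex sequences as walks\<close>

definition walk_edges :: "'a list \<Rightarrow> 'a set set" where
  "walk_edges xs = {{xs ! i, xs ! Suc i} | i. Suc i < length xs}"

definition walk_graph :: "'a list \<Rightarrow> 'a graph" where
  "walk_graph xs = (set xs, walk_edges xs)"

lemma verts_walk_graph [simp]: "verts (walk_graph xs) = set xs"
  and edges_walk_graph [simp]: "edges (walk_graph xs) = walk_edges xs"
  by (simp_all add: walk_graph_def verts_def edges_def)

lemma eq_walk_graph_iff: "H = walk_graph xs \<longleftrightarrow> verts H = set xs \<and> edges H = walk_edges xs"
  by (auto simp: walk_graph_def verts_def edges_def prod_eq_iff)

lemma walk_edges_zip: "walk_edges xs = (\<lambda>(x, y). {x, y}) ` set (zip xs (tl xs))"
  unfolding walk_edges_def set_zip by (force simp: nth_tl image_iff)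

lemma walk_edges_Nil [simp]: "walk_edges [] = {}"
  and walk_edges_singleton [simp]: "walk_edges [x] = {}"
  and walk_edges_Cons_Cons [simp]: "walk_edges (x # y # zs) = insert {x, y} (walk_edges (y # zs))"
  and finite_walk_edges [simp]: "finite (walk_edges xs)"
  by (simp_all add: walk_edges_zip)

lemma walk_edges_Cons: "ys \<noteq> [] \<Longrightarrow> walk_edges (x # ys) = insert {x, hd ys} (walk_edges ys)"
  by (cases ys) auto

lemma walk_edges_append:
  "xs \<noteq> [] \<Longrightarrow> ys \<noteq> [] \<Longrightarrow>
    walk_edges (xs @ ys) = walk_edges xs \<union> walk_edges ys \<union> {{last xs, hd ys}}"
proof (induction xs)
  case (Cons x xs)
  then show ?case
    by (cases "xs = []") (auto simp: walk_edges_Cons)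
qed simp

lemma walk_edges_split: "walk_edges (xs @ y # ys) = walk_edges (xs @ [y]) \<union> walk_edges (y # ys)"
proof (cases "xs = []")
  case False
  then show ?thesis
    using walk_edges_append[of xs "y # ys"] walk_edges_append[of xs "[y]"] by auto
qed simp

lemma walk_edges_append_last:
  "xs \<noteq> [] \<Longrightarrow> walk_edges (xs @ ys) = walk_edges xs \<union> walk_edges (last xs # ys)"
  using walk_edges_split[of "butlast xs" "last xs" ys]
  by (metis append.assoc append_Cons append_Nil append_butlast_last_id)

lemma walk_edges_rev [simp]: "walk_edges (rev xs) = walk_edges xs"
proof (induction xs)
  case (Cons x xs)
  show ?case
  proof (cases "xs = []")
    case False
    then have "walk_edges (rev xs @ [x]) = walk_edges xs \<union> {{hd xs, x}}"
      using walk_edges_append[of "rev xs" "[x]"] Cons.IH by (simp add: last_rev)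
    then show ?thesis
      using False by (auto simp: walk_edges_Cons insert_commute)
  qed simp
qed simp

lemma walk_graph_rev [simp]: "walk_graph (rev xs) = walk_graph xs"
  by (simp add: walk_graph_def)

lemma walk_edges_subset_set: "e \<in> walk_edges xs \<Longrightarrow> e \<subseteq> set xs"
  by (auto simp: walk_edges_def)

lemma card_walk_edges: "distinct xs \<Longrightarrow> card (walk_edges xs) = length xs - 1"
proof (induction xs)
  case (Cons x xs)
  show ?case
  proof (cases "xs = []")
    case False
    have "{x, hd xs} \<notin> walk_edges xs"
      using Cons.prems walk_edges_subset_set by fastforce
    then show ?thesis
      using Cons False by (simp add: walk_edges_Cons)
  qed simp
qed simp

lemma walk_edges_split_disjoint:
  assumes "distinct (xs @ [y])" "distinct (y # ys)"
    and "card (walk_edges (xs @ y # ys)) = length xs + length ys"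
  shows "walk_edges (xs @ [y]) \<inter> walk_edges (y # ys) = {}"
proof -
  have "card (walk_edges (xs @ [y]) \<union> walk_edges (y # ys))
      = card (walk_edges (xs @ [y])) + card (walk_edges (y # ys))"
    using assms walk_edges_split[of xs y ys] by (simp add: card_walk_edges)
  then show ?thesis
    using card_Un_Int[of "walk_edges (xs @ [y])" "walk_edges (y # ys)"] by simp
qed

lemma closing_edge_notin_walk_edges:
  assumes "distinct xs" "3 \<le> length xs"
  shows "{last xs, hd xs} \<notin> walk_edges xs"
proof -
  obtain x y zs where xs: "xs = x # y # zs" and "zs \<noteq> []"
    using assms(2) by (cases xs; cases "tl xs"; cases "tl (tl xs)") auto
  then have last: "last xs = last zs" "last zs \<in> set zs"
    by simp_all
  have "last zs \<noteq> y" "x \<notin> set (y # zs)"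
    using assms(1) xs last(2) by auto
  then have "{last zs, x} \<noteq> {x, y}"
    by (auto simp: doubleton_eq_iff)
  moreover have "{last zs, x} \<notin> walk_edges (y # zs)"
    using walk_edges_subset_set[of "{last zs, x}" "y # zs"] \<open>x \<notin> set (y # zs)\<close> by auto
  ultimately show ?thesis
    using xs last(1) by simp
qed

section \<open>Odd walks\<close>

text \<open>An odd walk lists the vertices of a path, or of a cycle with its first vertex repeated at
  the end, having an odd number \<open>\<ge> 3\<close> of edges.\<close>

definition odd_walk :: "'a list \<Rightarrow> bool" where
  "odd_walk xs \<longleftrightarrow> 4 \<le> length xs \<and> even (length xs) \<and> distinct (tl xs) \<and> distinct (butlast xs)"

definition odd_cycle_walk :: "'a list \<Rightarrow> bool" where
  "odd_cycle_walk xs \<longleftrightarrow> odd_walk xs \<and> hd xs = last xs"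

lemma odd_walk_nonempty: "odd_walk xs \<Longrightarrow> xs \<noteq> []"
  by (auto simp: odd_walk_def)

lemma odd_walk_distinct:
  assumes "odd_walk xs" "hd xs \<noteq> last xs"
  shows "distinct xs"
proof -
  obtain x t where xs: "xs = x # t" and "t \<noteq> []"
    using assms(1) by (cases xs; cases "tl xs") (auto simp: odd_walk_def)
  then have "set t = insert (last t) (set (butlast t))"
    by (cases t rule: rev_cases) auto
  moreover have "distinct t" "distinct (x # butlast t)" "x \<noteq> last t"
    using assms xs \<open>t \<noteq> []\<close> by (auto simp: odd_walk_def)
  ultimately show ?thesis
    using xs by simp
qed

lemma odd_walk_rev: "odd_walk xs \<Longrightarrow> odd_walk (rev xs)"
  using butlast_rev[of "rev xs"] by (simp add: odd_walk_def)

lemma odd_cycle_walk_rev: "odd_cycle_walk xs \<Longrightarrow> odd_cycle_walk (rev xs)"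
  by (simp add: odd_cycle_walk_def odd_walk_rev hd_rev last_rev)

lemma odd_cycle_walk_altdef:
  "odd_cycle_walk xs \<longleftrightarrow> 4 \<le> length xs \<and> even (length xs) \<and> distinct (tl xs) \<and> hd xs = last xs"
proof (intro iffI conjI)
  assume *: "4 \<le> length xs \<and> even (length xs) \<and> distinct (tl xs) \<and> hd xs = last xs"
  then obtain x t where xs: "xs = x # t" and "t \<noteq> []"
    by (cases xs; cases "tl xs") auto
  then have "distinct (butlast t @ [x])"
    using * by (simp add: append_butlast_last_id)
  then show "odd_cycle_walk xs"
    using * xs \<open>t \<noteq> []\<close> by (simp add: odd_cycle_walk_def odd_walk_def)
qed (auto simp: odd_cycle_walk_def odd_walk_def)

lemma odd_cycle_walk_iff:
  "odd_cycle_walk xs \<longleftrightarrow> (\<exists>cs. xs = cs @ [hd cs] \<and> distinct cs \<and> 3 \<le> length cs \<and> odd (length cs))"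
proof
  assume *: "odd_cycle_walk xs"
  then obtain x t where xs: "xs = x # t" and "t \<noteq> []"
    by (cases xs; cases "tl xs") (auto simp: odd_cycle_walk_def odd_walk_def)
  then have "xs = butlast xs @ [hd (butlast xs)]"
    using * by (simp add: odd_cycle_walk_def append_butlast_last_id)
  then show "\<exists>cs. xs = cs @ [hd cs] \<and> distinct cs \<and> 3 \<le> length cs \<and> odd (length cs)"
    using * by (intro exI[of _ "butlast xs"]) (auto simp: odd_cycle_walk_def odd_walk_def)
next
  assume "\<exists>cs. xs = cs @ [hd cs] \<and> distinct cs \<and> 3 \<le> length cs \<and> odd (length cs)"
  then obtain c cs where "xs = c # cs @ [c]" "distinct (c # cs)" "2 \<le> length cs" "even (length cs)"
    by (metis (no_types, lifting) Suc_le_length_iff append_Cons even_Suc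
        length_Cons list.sel(1) numeral_3_eq_3 numeral_2_eq_2)
  then show "odd_cycle_walk xs"
    by (simp add: odd_cycle_walk_altdef)
qed

lemma card_walk_edges_odd_walk:
  assumes "odd_walk xs"
  shows "card (walk_edges xs) = length xs - 1"
proof (cases "hd xs = last xs")
  case True
  then obtain cs where cs: "xs = cs @ [hd cs]" "distinct cs" "3 \<le> length cs"
    using assms odd_cycle_walk_iff[of xs] by (auto simp: odd_cycle_walk_def)
  then have "cs \<noteq> []"
    by auto
  then have "walk_edges xs = insert {last cs, hd cs} (walk_edges cs)"
    using cs(1) walk_edges_append[of cs "[hd cs]"] by simp
  then show ?thesis
    using cs closing_edge_notin_walk_edges[of cs] by (simp add: card_walk_edges)
next
  case False
  then show ?thesis
    using assms odd_walk_distinct card_walk_edges by blast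
qed

lemma odd_cycle_walk_rotate:
  assumes "odd_cycle_walk (us @ vs)" "us \<noteq> []" "vs \<noteq> []"
  shows "odd_cycle_walk (vs @ tl us @ [hd vs])"
    and "walk_graph (vs @ tl us @ [hd vs]) = walk_graph (us @ vs)"
proof -
  obtain u us' where us: "us = u # us'"
    using assms(2) by (cases us) auto
  obtain v vs' where vs: "vs = v # vs'"
    using assms(3) by (cases vs) auto
  have last_vs: "last vs = u"
    using assms us by (simp add: odd_cycle_walk_altdef)
  have "distinct (us' @ vs)"
    using assms(1) us by (simp add: odd_cycle_walk_altdef)
  then show "odd_cycle_walk (vs @ tl us @ [hd vs])"
    using assms(1) us vs by (auto simp: odd_cycle_walk_altdef)
  have "u \<in> set vs"
    using last_vs assms(3) last_in_set by fastforce
  then have "set (vs @ tl us @ [hd vs]) = set (us @ vs)"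
    using us vs by auto
  moreover have "walk_edges (vs @ tl us @ [hd vs]) = walk_edges (us @ vs)"
  proof (cases "us' = []")
    case True
    then show ?thesis
      using us vs last_vs walk_edges_append[of vs "[v]"] walk_edges_append[of "[u]" vs] by auto
  next
    case False
    have "walk_edges (vs @ us' @ [v]) = walk_edges vs \<union> walk_edges us' \<union> {{last us', v}, {u, hd us'}}"
      using walk_edges_append[of vs "us' @ [v]"] walk_edges_append[of us' "[v]"] vs False last_vs
      by auto
    moreover have "walk_edges (us @ vs) = walk_edges vs \<union> walk_edges us' \<union> {{last us', v}, {u, hd us'}}"
      using walk_edges_append[of us vs] us vs False by (auto simp: walk_edges_Cons)
    ultimately show ?thesis
      using us vs by simp
  qed
  ultimately show "walk_graph (vs @ tl us @ [hd vs]) = walk_graph (us @ vs)"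
    by (simp only: walk_graph_def)
qed

lemma odd_cycle_walk_rotate_to:
  assumes "odd_cycle_walk ys" "a \<in> set ys"
  obtains zs where "odd_cycle_walk zs" "walk_graph zs = walk_graph ys" "hd zs = a"
proof -
  obtain i where i: "i < length ys" "ys ! i = a"
    using assms(2) by (metis in_set_conv_nth)
  show ?thesis
  proof (cases i)
    case 0
    then show ?thesis
      using that assms(1) i by (simp add: hd_conv_nth)
  next
    case (Suc j)
    then have "take i ys \<noteq> []" "drop i ys \<noteq> []" "hd (drop i ys) = a"
      using i by (auto simp: hd_drop_conv_nth)
    then show ?thesis
      using that odd_cycle_walk_rotate[of "take i ys" "drop i ys"] assms(1) by simp
  qed
qed

lemma odd_cycle_walk_reverse_prefix:
  assumes "odd_cycle_walk (rev xs @ r)" "xs \<noteq> []" "hd xs \<noteq> last xs"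
  obtains r' where "odd_cycle_walk (xs @ r')" "walk_graph (xs @ r') = walk_graph (rev xs @ r)"
proof -
  have rev: "odd_cycle_walk (rev r @ xs)" "walk_graph (rev r @ xs) = walk_graph (rev xs @ r)"
    using odd_cycle_walk_rev[OF assms(1)] walk_graph_rev[of "rev xs @ r"] by simp_all
  have "rev r \<noteq> []"
    using rev(1) assms(3) by (auto simp: odd_cycle_walk_def)
  then show ?thesis
    using that odd_cycle_walk_rotate[OF rev(1) _ assms(2)] rev(2) by simp
qed

lemma odd_walk_split:
  assumes "odd_walk (u @ a # v)" "u \<noteq> []" "v \<noteq> []"
  shows "distinct (u @ [a])" "distinct (a # v)" "set u \<inter> set v \<subseteq> {hd u} \<inter> {last v}"
    "walk_edges (u @ [a]) \<inter> walk_edges (a # v) = {}"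
proof -
  have tl: "distinct (tl u @ a # v)" and butlast: "distinct (u @ a # butlast v)"
    using assms by (auto simp: odd_walk_def butlast_append)
  then show "distinct (u @ [a])" "distinct (a # v)"
    by auto
  have "set u = insert (hd u) (set (tl u))" "set v = insert (last v) (set (butlast v))"
    using assms(2,3) by (cases u, simp_all, cases v rule: rev_cases, simp_all)
  then show "set u \<inter> set v \<subseteq> {hd u} \<inter> {last v}"
    using tl butlast by auto
  show "walk_edges (u @ [a]) \<inter> walk_edges (a # v) = {}"
    using walk_edges_split_disjoint[of u a v] card_walk_edges_odd_walk[OF assms(1)]
      \<open>distinct (u @ [a])\<close> \<open>distinct (a # v)\<close> by simp
qed

lemma odd_cycle_walk_arcs:
  assumes "odd_cycle_walk (a # m @ b # w)" "a \<noteq> b"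
  shows "distinct (a # m @ [b])" "distinct (b # w)" "w \<noteq> []" "last w = a" "set m \<inter> set w = {}"
    "even (length m + length w)"
    "walk_edges (a # m @ b # w) = walk_edges (a # m @ [b]) \<union> walk_edges (b # w)"
    "walk_edges (a # m @ [b]) \<inter> walk_edges (b # w) = {}"
proof -
  have tl: "distinct (m @ b # w)" "last (b # w) = a" "even (length m + length w)"
    using assms(1) by (auto simp: odd_cycle_walk_altdef)
  then show "w \<noteq> []" "last w = a"
    using assms(2) by (auto split: if_splits)
  then have "a \<in> set w"
    using last_in_set by fastforce
  then show "distinct (a # m @ [b])" "distinct (b # w)" "set m \<inter> set w = {}"
    using tl(1) assms(2) by auto
  show "even (length m + length w)"
    using tl(3) .
  show "walk_edges (a # m @ b # w) = walk_edges (a # m @ [b]) \<union> walk_edges (b # w)"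
    using walk_edges_split[of "a # m" b w] by simp
  have "odd_walk (a # m @ b # w)"
    using assms(1) unfolding odd_cycle_walk_def by blast
  then have "card (walk_edges ((a # m) @ b # w)) = length (a # m) + length w"
    using card_walk_edges_odd_walk[of "a # m @ b # w"] by simp
  then show "walk_edges (a # m @ [b]) \<inter> walk_edges (b # w) = {}"
    using walk_edges_split_disjoint[of "a # m" b w] \<open>distinct (a # m @ [b])\<close> \<open>distinct (b # w)\<close>
    by simp
qed

section \<open>Walks as graphs\<close>

definition odd_graph :: "'a graph \<Rightarrow> bool" where
  "odd_graph H \<longleftrightarrow> graph H \<and> odd (card (edges H)) \<and> 3 \<le> card (edges H)"

lemma odd_walk_adjacent_neq:
  assumes "odd_walk xs" "Suc i < length xs"
  shows "xs ! i \<noteq> xs ! Suc i"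
proof (cases i)
  case 0
  have "distinct (butlast xs)" "1 < length (butlast xs)"
    using assms(1) by (auto simp: odd_walk_def)
  then have "butlast xs ! 0 \<noteq> butlast xs ! 1"
    by (simp add: nth_eq_iff_index_eq)
  moreover have "butlast xs ! 0 = xs ! 0" "butlast xs ! 1 = xs ! 1"
    using \<open>1 < length (butlast xs)\<close> by (simp_all add: nth_butlast)
  ultimately show ?thesis
    using 0 by simp
next
  case (Suc j)
  have "tl xs ! j \<noteq> tl xs ! Suc j"
    using assms Suc by (simp add: odd_walk_def nth_eq_iff_index_eq)
  then show ?thesis
    using Suc assms by (simp add: nth_tl)
qed

lemma odd_graph_walk_graph:
  assumes "odd_walk xs"
  shows "odd_graph (walk_graph xs)"
proof -
  have "graph (walk_graph xs)"
    unfolding graph_def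
  proof (intro conjI ballI)
    fix e
    assume "e \<in> edges (walk_graph xs)"
    then obtain i where "e = {xs ! i, xs ! Suc i}" "Suc i < length xs"
      by (auto simp: walk_edges_def)
    then show "\<exists>u v. e = {u, v} \<and> u \<noteq> v \<and> u \<in> verts (walk_graph xs) \<and> v \<in> verts (walk_graph xs)"
      using odd_walk_adjacent_neq[OF assms] by (metis Suc_lessD nth_mem verts_walk_graph)
  qed simp
  then show ?thesis
    using assms card_walk_edges_odd_walk[OF assms] by (auto simp: odd_graph_def odd_walk_def)
qed

lemma is_path_on_iff:
  "is_path_on H xs \<longleftrightarrow> distinct xs \<and> 2 \<le> length xs \<and> verts H = set xs \<and> edges H = walk_edges xs"
  unfolding is_path_on_def walk_edges_def by simp

lemma is_cycle_on_iff:
  "is_cycle_on H xs \<longleftrightarrow>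
    distinct xs \<and> 3 \<le> length xs \<and> verts H = set xs \<and> edges H = insert {last xs, hd xs} (walk_edges xs)"
  unfolding is_cycle_on_def walk_edges_def by auto

lemma is_path_on_walk_graph: "odd_walk xs \<Longrightarrow> hd xs \<noteq> last xs \<Longrightarrow> is_path_on (walk_graph xs) xs"
  using odd_walk_distinct by (fastforce simp: is_path_on_iff odd_walk_def)

lemma is_cycle_walk_graph:
  assumes "odd_cycle_walk xs"
  shows "is_cycle (walk_graph xs)"
proof -
  obtain cs where cs: "xs = cs @ [hd cs]" "distinct cs" "3 \<le> length cs"
    using assms odd_cycle_walk_iff by blast
  then have "cs \<noteq> []"
    by auto
  then have "is_cycle_on (walk_graph xs) cs"
    using cs walk_edges_append[of cs "[hd cs]"] by (auto simp: is_cycle_on_iff)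
  then show ?thesis
    unfolding is_cycle_def by blast
qed

lemma is_cycle_obtain_odd_cycle_walk:
  assumes "odd_graph H" "is_cycle H"
  obtains xs where "H = walk_graph xs" "odd_cycle_walk xs"
proof -
  obtain cs where cs: "distinct cs" "3 \<le> length cs" "verts H = set cs"
    "edges H = insert {last cs, hd cs} (walk_edges cs)"
    using assms(2) unfolding is_cycle_def is_cycle_on_iff by blast
  then have "cs \<noteq> []"
    by auto
  have "card (edges H) = length cs"
    using cs closing_edge_notin_walk_edges[of cs] by (simp add: card_walk_edges)
  then have "odd_cycle_walk (cs @ [hd cs])"
    using assms(1) cs unfolding odd_cycle_walk_iff odd_graph_def by auto
  moreover have "H = walk_graph (cs @ [hd cs])"
    using cs \<open>cs \<noteq> []\<close> walk_edges_append[of cs "[hd cs]"]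
    by (auto simp: eq_walk_graph_iff insert_absorb)
  ultimately show ?thesis
    using that by blast
qed


section \<open>Ear sequences\<close>

definition ears_verts :: "'a graph list \<Rightarrow> 'a set" where
  "ears_verts Ks = \<Union> (verts ` set Ks)"

definition ears_edges :: "'a graph list \<Rightarrow> 'a set set" where
  "ears_edges Ks = \<Union> (edges ` set Ks)"

lemma ears_verts_simps [simp]:
  "ears_verts [] = {}" "ears_verts (Ks @ Ls) = ears_verts Ks \<union> ears_verts Ls"
  "ears_verts (K # Ks) = verts K \<union> ears_verts Ks"
  by (auto simp: ears_verts_def)

lemma ears_edges_simps [simp]:
  "ears_edges [] = {}" "ears_edges (Ks @ Ls) = ears_edges Ks \<union> ears_edges Ls"
  "ears_edges (K # Ks) = edges K \<union> ears_edges Ks"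
  by (auto simp: ears_edges_def)

definition attached :: "'a set \<Rightarrow> 'a graph \<Rightarrow> bool" where
  "attached S H \<longleftrightarrow> (\<exists>xs. is_path_on H xs \<and> verts H \<inter> S = {hd xs, last xs}) \<or>
     (is_cycle H \<and> card (verts H \<inter> S) = 1)"

definition ear_walk :: "'a set \<Rightarrow> 'a list \<Rightarrow> bool" where
  "ear_walk S xs \<longleftrightarrow> odd_walk xs \<and> set xs \<inter> S = {hd xs, last xs}"

inductive ear_seq :: "'a graph list \<Rightarrow> bool" where
  first: "odd_graph H \<Longrightarrow> is_cycle H \<Longrightarrow> ear_seq [H]"
| snoc: "ear_seq Ks \<Longrightarrow> odd_graph H \<Longrightarrow> edges H \<inter> ears_edges Ks = {} \<Longrightarrow>
    attached (ears_verts Ks) H \<Longrightarrow> ear_seq (Ks @ [H])"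

lemma ear_seq_nonempty: "ear_seq Ks \<Longrightarrow> Ks \<noteq> []"
  by (induction rule: ear_seq.induct) auto

lemma ear_seq_nth_0_append: "ear_seq Ks \<Longrightarrow> (Ks @ Ls) ! 0 = Ks ! 0"
  using ear_seq_nonempty by (auto simp: nth_append)

lemma ear_seq_snocD:
  assumes "ear_seq (Ks @ [H])" "Ks \<noteq> []"
  shows "ear_seq Ks" "odd_graph H" "edges H \<inter> ears_edges Ks = {}" "attached (ears_verts Ks) H"
  using assms by (cases rule: ear_seq.cases; auto)+

lemma ear_seq_prefix: "ear_seq (Ks @ Ls) \<Longrightarrow> Ks \<noteq> [] \<Longrightarrow> ear_seq Ks"
proof (induction Ls rule: rev_induct)
  case (snoc L Ls)
  then show ?case
    using ear_seq_snocD(1)[of "Ks @ Ls" L] by simp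
qed simp

lemma ear_seq_first: "ear_seq Ks \<Longrightarrow> odd_graph (Ks ! 0) \<and> is_cycle (Ks ! 0)"
  by (induction rule: ear_seq.induct) (auto simp: ear_seq_nth_0_append)

lemma ear_seq_odd_graph: "ear_seq Ks \<Longrightarrow> H \<in> set Ks \<Longrightarrow> odd_graph H"
  by (induction rule: ear_seq.induct) auto

lemma ear_seq_edges_disjoint: "ear_seq (Ks @ Ls) \<Longrightarrow> ears_edges Ks \<inter> ears_edges Ls = {}"
proof (induction Ls rule: rev_induct)
  case (snoc L Ls)
  show ?case
  proof (cases "Ks @ Ls = []")
    case False
    then show ?thesis
      using snoc ear_seq_snocD[of "Ks @ Ls" L] by auto
  qed simp
qed simp

lemma attached_cong: "attached S H \<Longrightarrow> verts H \<inter> S' = verts H \<inter> S \<Longrightarrow> attached S' H"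
  unfolding attached_def by simp

lemma ear_seq_replace_prefix:
  assumes "ear_seq (Ks @ Ls)" "Ks \<noteq> []" "ear_seq Ks'" "ears_verts Ks \<subseteq> ears_verts Ks'"
    "(ears_verts Ks' - ears_verts Ks) \<inter> ears_verts Ls = {}" "ears_edges Ks' \<inter> ears_edges Ls = {}"
  shows "ear_seq (Ks' @ Ls)"
  using assms
proof (induction Ls rule: rev_induct)
  case (snoc L Ls)
  have L: "ear_seq (Ks @ Ls)" "odd_graph L" "edges L \<inter> ears_edges (Ks @ Ls) = {}"
    "attached (ears_verts (Ks @ Ls)) L"
    using ear_seq_snocD[of "Ks @ Ls" L] snoc.prems by auto
  have "ear_seq (Ks' @ Ls)"
    using snoc L by auto
  moreover have "edges L \<inter> ears_edges (Ks' @ Ls) = {}"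
    using snoc.prems L by auto
  moreover have "verts L \<inter> ears_verts (Ks' @ Ls) = verts L \<inter> ears_verts (Ks @ Ls)"
    using snoc.prems(4,5) by auto
  then have "attached (ears_verts (Ks' @ Ls)) L"
    using attached_cong L(4) by blast
  ultimately show ?case
    using ear_seq.snoc L(2) by fastforce
qed simp

lemma ear_seq_prepend_cycle:
  assumes "ear_seq Ks" "ear_seq [C]" "verts C \<inter> ears_verts Ks = {w}" "w \<in> verts (Ks ! 0)"
    "edges C \<inter> ears_edges Ks = {}"
  shows "ear_seq (C # Ks)"
  using assms
proof (induction rule: ear_seq.induct)
  case (first H)
  have "verts H \<inter> ears_verts [C] = {w}" "edges H \<inter> ears_edges [C] = {}"
    using first.prems by auto
  then have "attached (ears_verts [C]) H"
    using first.hyps(2) by (simp add: attached_def)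
  then show ?case
    using ear_seq.snoc[OF first.prems(1) first.hyps(1)] \<open>edges H \<inter> ears_edges [C] = {}\<close>
    by simp
next
  case (snoc Ks H)
  have "w \<in> verts (Ks ! 0)"
    using snoc.prems(3) snoc.hyps(1) by (simp add: ear_seq_nth_0_append)
  moreover have "Ks ! 0 \<in> set Ks"
    using ear_seq_nonempty[OF snoc.hyps(1)] by simp
  ultimately have w: "w \<in> ears_verts Ks"
    by (auto simp: ears_verts_def)
  then have "verts C \<inter> ears_verts Ks = {w}" "edges C \<inter> ears_edges Ks = {}"
    using snoc.prems(2,4) by auto
  then have "ear_seq (C # Ks)"
    using snoc.IH snoc.prems(1) \<open>w \<in> verts (Ks ! 0)\<close> by blast
  moreover have "verts H \<inter> ears_verts (C # Ks) = verts H \<inter> ears_verts Ks"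
    using snoc.prems(2) w by auto
  then have "attached (ears_verts (C # Ks)) H"
    using attached_cong snoc.hyps(4) by blast
  moreover have "edges H \<inter> ears_edges (C # Ks) = {}"
    using snoc.hyps(3) snoc.prems(4) by auto
  ultimately show ?case
    using ear_seq.snoc[of "C # Ks" H] snoc.hyps(2) by simp
qed

lemma ear_walk_rev: "ear_walk S xs \<Longrightarrow> ear_walk S (rev xs)"
  using odd_walk_nonempty by (auto simp: ear_walk_def odd_walk_rev hd_rev last_rev)

lemma attached_walk_graph:
  assumes "ear_walk S xs"
  shows "attached S (walk_graph xs)"
proof (cases "hd xs = last xs")
  case True
  then have "odd_cycle_walk xs"
    using assms by (simp add: ear_walk_def odd_cycle_walk_def)
  then show ?thesis
    using assms True is_cycle_walk_graph by (auto simp: attached_def ear_walk_def)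
next
  case False
  then show ?thesis
    using assms is_path_on_walk_graph by (auto simp: attached_def ear_walk_def)
qed

lemma ear_seq_single: "odd_cycle_walk xs \<Longrightarrow> ear_seq [walk_graph xs]"
  by (simp add: ear_seq.first is_cycle_walk_graph odd_cycle_walk_def odd_graph_walk_graph)

lemma ear_seq_snoc_ear_walk:
  assumes "ear_seq Ks" "ear_walk (ears_verts Ks) xs" "walk_edges xs \<inter> ears_edges Ks = {}"
  shows "ear_seq (Ks @ [walk_graph xs])"
  using assms ear_seq.snoc odd_graph_walk_graph attached_walk_graph
  by (metis ear_walk_def edges_walk_graph)

lemma attached_obtain_ear_walk:
  assumes "odd_graph H" "attached S H"
  obtains xs where "H = walk_graph xs" "ear_walk S xs"
  using assms(2) unfolding attached_def
proof (elim disjE exE conjE)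
  fix xs
  assume path: "is_path_on H xs" and ends: "verts H \<inter> S = {hd xs, last xs}"
  then have "card (edges H) = length xs - 1"
    by (simp add: is_path_on_iff card_walk_edges)
  then have "4 \<le> length xs" "even (length xs)"
    using assms(1) unfolding odd_graph_def by (linarith, cases "length xs") auto
  then have "odd_walk xs"
    using path by (simp add: odd_walk_def is_path_on_iff distinct_butlast distinct_tl)
  then show thesis
    using that path ends by (simp add: ear_walk_def eq_walk_graph_iff is_path_on_iff)
next
  assume cycle: "is_cycle H" and "card (verts H \<inter> S) = 1"
  then obtain w where w: "verts H \<inter> S = {w}"
    by (meson card_1_singletonE)
  obtain ys where ys: "H = walk_graph ys" "odd_cycle_walk ys"
    using is_cycle_obtain_odd_cycle_walk[OF assms(1) cycle] by blast
  then obtain zs where zs: "odd_cycle_walk zs" "walk_graph zs = H" "hd zs = w"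
    using odd_cycle_walk_rotate_to[of ys w] w by auto
  moreover have "set zs = verts H"
    using zs(2) by auto
  ultimately have "set zs \<inter> S = {hd zs, last zs}"
    using w by (simp add: odd_cycle_walk_def)
  then show thesis
    using that zs by (auto simp: ear_walk_def odd_cycle_walk_def)
qed

text \<open>A single edge is not an ear; as an odd ear decomposition need not use every edge of
  the graph, it is simply dropped.\<close>

lemma ear_seq_snoc_optional_ear:
  assumes "ear_seq Ks" "distinct R" "2 \<le> length R" "even (length R)"
    "set R \<inter> ears_verts Ks = {hd R, last R}" "walk_edges R \<inter> ears_edges Ks = {}"
  obtains Ks' where "ear_seq Ks'" "Ks' ! 0 = Ks ! 0" "ears_verts Ks' = ears_verts Ks \<union> set R"
    "ears_edges Ks' \<subseteq> ears_edges Ks \<union> walk_edges R"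
proof (cases "length R = 2")
  case True
  then have "set R = {hd R, last R}"
    by (cases R rule: remdups_adj.cases) auto
  then show thesis
    using that[of Ks] assms(1,5) by auto
next
  case False
  then have "4 \<le> length R"
    using assms(3,4) by presburger
  then have "ear_walk (ears_verts Ks) R"
    using assms by (simp add: ear_walk_def odd_walk_def distinct_tl distinct_butlast)
  then show thesis
    using that[of "Ks @ [walk_graph R]"] ear_seq_snoc_ear_walk assms(1,6)
    by (auto simp: ear_seq_nth_0_append)
qed

lemma ear_walk_detour:
  assumes hs: "ear_walk S (u @ a # v)" "u \<noteq> []" "v \<noteq> []" "even (length u)"
    and xs: "odd_walk xs" "hd xs = a" "last xs \<in> S" "last xs \<notin> set (u @ a # v)" "a \<notin> S"
    "set xs \<inter> (S \<union> set (u @ a # v)) = {a, last xs}"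
  shows "ear_walk S (u @ xs)" "set v \<inter> (S \<union> set u \<union> set xs) \<subseteq> {last v}"
proof -
  have split: "distinct (u @ [a])" "distinct (a # v)" "set u \<inter> set v \<subseteq> {hd u} \<inter> {last v}"
    "set (u @ a # v) \<inter> S = {hd u, last v}"
    using hs odd_walk_split[of u a v] by (auto simp: ear_walk_def)
  have "set (u @ a # v) \<inter> set xs \<subseteq> {a, last xs}"
    using xs(6) by auto
  then have u: "distinct u" "a \<notin> set u" "set u \<inter> set xs = {}" and "set v \<inter> set xs = {}"
    using split(1,2) xs(4) by auto
  have "set u \<inter> S \<subseteq> {hd u, last v}" "set v \<inter> S \<subseteq> {hd u, last v}"
    unfolding split(4)[symmetric] by auto
  then have "set u \<inter> S \<subseteq> {hd u}" "set v \<inter> S \<subseteq> {last v}"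
    using split(3) hd_in_set[OF hs(2)] last_in_set[OF hs(3)] by auto
  then show "set v \<inter> (S \<union> set u \<union> set xs) \<subseteq> {last v}"
    using split(3) \<open>set v \<inter> set xs = {}\<close> by auto
  have "distinct xs" "xs \<noteq> []" "length xs \<ge> 4" "even (length xs)"
    using xs odd_walk_distinct[of xs] by (auto simp: odd_walk_def)
  then have "odd_walk (u @ xs)"
    using u hs(2,4) by (auto simp: odd_walk_def distinct_tl distinct_butlast butlast_append
        dest: in_set_butlastD list.set_sel(2))
  moreover have "set xs \<inter> S \<subseteq> {a, last xs}"
    using xs(6) by auto
  then have "set xs \<inter> S = {last xs}"
    using xs(3,5) last_in_set[OF \<open>xs \<noteq> []\<close>] by auto
  moreover have "hd u \<in> S"
    using hs(1,2) by (auto simp: ear_walk_def)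
  ultimately show "ear_walk S (u @ xs)"
    using \<open>set u \<inter> S \<subseteq> {hd u}\<close> hs(2) \<open>xs \<noteq> []\<close> by (auto simp: ear_walk_def)
qed

section \<open>Moving an ear onto the first cycle\<close>

definition rebuild_leading :: "'a graph list \<Rightarrow> 'a list \<Rightarrow> 'a graph list \<Rightarrow> bool" where
  "rebuild_leading Hs xs Ks \<longleftrightarrow> ear_seq Ks \<and> ears_verts Ks = ears_verts Hs \<union> set xs \<and>
     ears_edges Ks \<subseteq> ears_edges Hs \<union> walk_edges xs \<and>
     (\<exists>r. Ks ! 0 = walk_graph (xs @ r) \<and> odd_cycle_walk (xs @ r))"

definition vertices_can_lead :: "'a graph list \<Rightarrow> bool" where
  "vertices_can_lead Hs \<longleftrightarrow> (\<forall>w \<in> ears_verts Hs. \<exists>Ks. ear_seq Ks \<and> ears_verts Ks = ears_verts Hs \<and>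
     ears_edges Ks \<subseteq> ears_edges Hs \<and> w \<in> verts (Ks ! 0))"

definition ears_can_lead :: "'a graph list \<Rightarrow> bool" where
  "ears_can_lead Hs \<longleftrightarrow> (\<forall>xs. ear_walk (ears_verts Hs) xs \<longrightarrow> walk_edges xs \<inter> ears_edges Hs = {} \<longrightarrow>
     (\<exists>Ks. rebuild_leading Hs xs Ks))"

lemma rebuild_leading_rev:
  assumes "rebuild_leading Hs (rev xs) Ks" "xs \<noteq> []" "hd xs \<noteq> last xs"
  shows "rebuild_leading Hs xs Ks"
proof -
  obtain r where r: "Ks ! 0 = walk_graph (rev xs @ r)" "odd_cycle_walk (rev xs @ r)"
    using assms(1) by (auto simp: rebuild_leading_def)
  obtain r' where "odd_cycle_walk (xs @ r')" "walk_graph (xs @ r') = walk_graph (rev xs @ r)"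
    using odd_cycle_walk_reverse_prefix[OF r(2) assms(2,3)] .
  moreover have "ear_seq Ks" "ears_verts Ks = ears_verts Hs \<union> set xs"
    "ears_edges Ks \<subseteq> ears_edges Hs \<union> walk_edges xs"
    using assms(1) by (auto simp: rebuild_leading_def)
  ultimately show ?thesis
    using r(1) unfolding rebuild_leading_def by metis
qed

lemma rebuild_leading_first_cycle_suffix:
  assumes "rebuild_leading Hs (us @ xs) Ks" "us \<noteq> []" "xs \<noteq> []"
  obtains r where "Ks ! 0 = walk_graph (xs @ r)" "odd_cycle_walk (xs @ r)"
proof -
  obtain r where r: "Ks ! 0 = walk_graph (us @ xs @ r)" "odd_cycle_walk (us @ xs @ r)"
    using assms(1) by (auto simp: rebuild_leading_def)
  then show thesis
    using that[of "r @ tl us @ [hd xs]"] odd_cycle_walk_rotate[OF r(2) assms(2)] assms(3) by simp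
qed

lemma rebuild_leading_cong:
  assumes "rebuild_leading Hs xs Ks" "ears_verts Hs' \<union> set xs = ears_verts Hs \<union> set xs"
    "ears_edges Hs \<union> walk_edges xs \<subseteq> ears_edges Hs' \<union> walk_edges xs"
  shows "rebuild_leading Hs' xs Ks"
  using assms by (auto simp: rebuild_leading_def)

lemma rebuild_leading_append:
  assumes "rebuild_leading Hs xs Ks" "ear_seq (Hs @ Ls)" "Hs \<noteq> []"
    "set xs \<inter> ears_verts Ls \<subseteq> ears_verts Hs" "walk_edges xs \<inter> ears_edges Ls = {}"
  shows "rebuild_leading (Hs @ Ls) xs (Ks @ Ls)"
proof -
  have Ks: "ear_seq Ks" "ears_verts Ks = ears_verts Hs \<union> set xs"
    "ears_edges Ks \<subseteq> ears_edges Hs \<union> walk_edges xs"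
    using assms(1) by (auto simp: rebuild_leading_def)
  have "ears_edges Ks \<inter> ears_edges Ls = {}"
    using Ks(3) assms(5) ear_seq_edges_disjoint[OF assms(2)] by blast
  then have "ear_seq (Ks @ Ls)"
    using ear_seq_replace_prefix[OF assms(2,3) Ks(1)] Ks(2) assms(4) by auto
  then show ?thesis
    using assms(1) Ks(1) by (auto simp: rebuild_leading_def ear_seq_nth_0_append)
qed

lemma rebuild_leading_single_cycle:
  assumes "odd_cycle_walk (xs @ r)" "distinct R" "2 \<le> length R" "even (length R)"
    "set R \<inter> set (xs @ r) = {hd R, last R}" "walk_edges R \<inter> walk_edges (xs @ r) = {}"
    "set (xs @ r) \<union> set R = set Y \<union> set xs"
    "walk_edges (xs @ r) \<union> walk_edges R \<subseteq> walk_edges Y \<union> walk_edges xs"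
  shows "\<exists>Ks. rebuild_leading [walk_graph Y] xs Ks"
proof -
  obtain Ks where "ear_seq Ks" "Ks ! 0 = walk_graph (xs @ r)"
    "ears_verts Ks = set (xs @ r) \<union> set R" "ears_edges Ks \<subseteq> walk_edges (xs @ r) \<union> walk_edges R"
    using ear_seq_snoc_optional_ear[OF ear_seq_single[OF assms(1)] assms(2-4)] assms(5,6)
    by (auto simp: Int_commute)
  then have "rebuild_leading [walk_graph Y] xs Ks"
    using assms(1,7,8) unfolding rebuild_leading_def by auto
  then show ?thesis ..
qed

text \<open>A path \<open>xs\<close> joining two vertices \<open>a \<noteq> b\<close> of an odd cycle splits it into two arcs of
  different parity; together with the arc of even length, \<open>xs\<close> forms a new odd cycle, and the
  other arc becomes an ear of it. Reversing the cycle if necessary, the even arc is the one through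
  \<open>m\<close>.\<close>

lemma rebuild_leading_cycle_chord_odd:
  assumes Y: "odd_cycle_walk Y" "Y = a # m @ b # w" "a \<noteq> b" "odd (length m)"
    and xs: "odd_walk xs" "hd xs = a" "last xs = b" "set xs \<inter> set Y = {a, b}"
    "walk_edges xs \<inter> walk_edges Y = {}"
  shows "\<exists>Ks. rebuild_leading [walk_graph Y] xs Ks"
proof -
  note arcs = odd_cycle_walk_arcs[OF Y(1)[unfolded Y(2)] Y(3)]
  have "distinct xs" "xs \<noteq> []" "length xs \<ge> 4" "even (length xs)"
    using xs odd_walk_distinct[of xs] Y(3) by (auto simp: odd_walk_def)
  then have "a \<notin> set (tl xs)" "set (tl xs) \<subseteq> set xs" "a \<in> set xs" "b \<in> set xs"
    using xs(2,3) by (cases xs; auto)+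
  have "a \<in> set w"
    using arcs(3,4) last_in_set by fastforce
  then have "set m \<inter> set xs = {}" "set w \<inter> set xs \<subseteq> {a}"
    using xs(4) Y(2) arcs(1,2) by auto
  let ?\<alpha> = "a # m @ [b]" and ?\<beta> = "b # w" and ?r = "rev m @ [a]"
  have edges_D: "walk_edges (xs @ ?r) = walk_edges xs \<union> walk_edges ?\<alpha>"
    using walk_edges_append_last[OF \<open>xs \<noteq> []\<close>, of ?r] walk_edges_rev[of ?\<alpha>] xs(3) by simp
  have "odd_cycle_walk (xs @ ?r)"
    unfolding odd_cycle_walk_altdef
    using Y(4) arcs(1) \<open>xs \<noteq> []\<close> \<open>length xs \<ge> 4\<close> \<open>even (length xs)\<close> \<open>distinct xs\<close>
      \<open>a \<notin> set (tl xs)\<close> \<open>set (tl xs) \<subseteq> set xs\<close> \<open>set m \<inter> set xs = {}\<close> xs(2)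
    by (auto simp: distinct_tl)
  then show ?thesis
  proof (rule rebuild_leading_single_cycle)
    show "distinct ?\<beta>" "2 \<le> length ?\<beta>" "even (length ?\<beta>)"
      using arcs(2,3,6) Y(4) by (auto simp: Suc_le_eq)
    show "set ?\<beta> \<inter> set (xs @ ?r) = {hd ?\<beta>, last ?\<beta>}"
      using arcs(1,3,4,5) \<open>a \<in> set w\<close> \<open>b \<in> set xs\<close> \<open>set w \<inter> set xs \<subseteq> {a}\<close> by auto
    show "walk_edges ?\<beta> \<inter> walk_edges (xs @ ?r) = {}"
      using edges_D arcs(7,8) xs(5) Y(2) by auto
    show "set (xs @ ?r) \<union> set ?\<beta> = set Y \<union> set xs"
      using Y(2) \<open>a \<in> set xs\<close> by auto
    show "walk_edges (xs @ ?r) \<union> walk_edges ?\<beta> \<subseteq> walk_edges Y \<union> walk_edges xs"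
      using edges_D arcs(7) Y(2) by auto
  qed
qed

lemma rebuild_leading_cycle_chord:
  assumes Y: "odd_cycle_walk Y" "Y = a # m @ b # w" "a \<noteq> b"
    and xs: "odd_walk xs" "hd xs = a" "last xs = b" "set xs \<inter> set Y = {a, b}"
    "walk_edges xs \<inter> walk_edges Y = {}"
  shows "\<exists>Ks. rebuild_leading [walk_graph Y] xs Ks"
proof (cases "odd (length m)")
  case True
  show ?thesis
    using rebuild_leading_cycle_chord_odd[OF Y True xs] .
next
  case False
  note arcs = odd_cycle_walk_arcs[OF Y(1)[unfolded Y(2)] Y(3)]
  then obtain w' where "w = w' @ [a]"
    by (metis append_butlast_last_id)
  then have rev_Y: "rev Y = a # rev w' @ b # rev m @ [a]" "odd (length (rev w'))"
    using Y(2) False arcs(6) by simp_all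
  have "\<exists>Ks. rebuild_leading [walk_graph (rev Y)] xs Ks"
    by (rule rebuild_leading_cycle_chord_odd[OF odd_cycle_walk_rev[OF Y(1)] rev_Y(1) Y(3) rev_Y(2)
          xs(1-3)]) (use xs(4,5) in simp_all)
  then show ?thesis
    by simp
qed

lemma rebuild_leading_cycle_ends:
  assumes "odd_cycle_walk Y" "ear_walk (set Y) xs" "hd xs \<noteq> last xs"
    "walk_edges xs \<inter> walk_edges Y = {}"
  shows "\<exists>Ks. rebuild_leading [walk_graph Y] xs Ks"
proof -
  have ends: "set xs \<inter> set Y = {hd xs, last xs}"
    using assms(2) by (auto simp: ear_walk_def)
  then obtain Z where Z: "odd_cycle_walk Z" "walk_graph Z = walk_graph Y" "hd Z = hd xs"
    using odd_cycle_walk_rotate_to[OF assms(1), of "hd xs"] by blast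
  then have "set Z = set Y" "walk_edges Z = walk_edges Y"
    by (metis verts_walk_graph, metis edges_walk_graph)
  have "Z = hd xs # tl Z"
    using Z(1,3) odd_walk_nonempty by (metis list.collapse odd_cycle_walk_def)
  moreover have "last xs \<in> set (tl Z)"
    using calculation ends assms(3) \<open>set Z = set Y\<close> by (metis Int_iff insertCI set_ConsD)
  then obtain m w where "tl Z = m @ last xs # w"
    by (meson split_list)
  ultimately have "\<exists>Ks. rebuild_leading [walk_graph Z] xs Ks"
    using rebuild_leading_cycle_chord[OF Z(1) _ assms(3)] assms(2) ends
      \<open>set Z = set Y\<close> \<open>walk_edges Z = walk_edges Y\<close> assms(4)
    by (simp add: ear_walk_def)
  then show ?thesis
    using Z(2) by simp
qed

lemma rebuild_leading_closed_ear:
  assumes "vertices_can_lead Hs" "ear_walk (ears_verts Hs) xs" "hd xs = last xs"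
    "walk_edges xs \<inter> ears_edges Hs = {}"
  shows "\<exists>Ks. rebuild_leading Hs xs Ks"
proof -
  have cycle: "odd_cycle_walk xs" and meet: "set xs \<inter> ears_verts Hs = {hd xs}"
    using assms(2,3) by (auto simp: ear_walk_def odd_cycle_walk_def)
  then obtain Ks where Ks: "ear_seq Ks" "ears_verts Ks = ears_verts Hs"
    "ears_edges Ks \<subseteq> ears_edges Hs" "hd xs \<in> verts (Ks ! 0)"
    using assms(1) unfolding vertices_can_lead_def by blast
  have "ear_seq (walk_graph xs # Ks)"
    using ear_seq_prepend_cycle[OF Ks(1) ear_seq_single[OF cycle] _ Ks(4)] meet Ks(2,3) assms(4)
    by auto
  then have "rebuild_leading Hs xs (walk_graph xs # Ks)"
    using cycle Ks(2,3) unfolding rebuild_leading_def by (auto intro: exI[of _ "[]"])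
  then show ?thesis ..
qed

lemma single_cycle_leads:
  assumes "odd_graph H" "is_cycle H"
  shows "vertices_can_lead [H]" "ears_can_lead [H]"
proof -
  show vertices: "vertices_can_lead [H]"
    using ear_seq.first[OF assms] by (auto simp: vertices_can_lead_def)
  show "ears_can_lead [H]"
    unfolding ears_can_lead_def
  proof (intro allI impI)
    fix xs
    assume ear: "ear_walk (ears_verts [H]) xs" and edges: "walk_edges xs \<inter> ears_edges [H] = {}"
    show "\<exists>Ks. rebuild_leading [H] xs Ks"
    proof (cases "hd xs = last xs")
      case True
      then show ?thesis
        using rebuild_leading_closed_ear[OF vertices ear _ edges] by blast
    next
      case False
      obtain Y where "H = walk_graph Y" "odd_cycle_walk Y"
        using is_cycle_obtain_odd_cycle_walk[OF assms] .
      then show ?thesis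
        using rebuild_leading_cycle_ends[of Y xs] ear edges False by simp
    qed
  qed
qed

lemma vertices_can_lead_snoc:
  assumes "ear_seq (Hs @ [H])" "Hs \<noteq> []" "vertices_can_lead Hs" "ears_can_lead Hs"
  shows "vertices_can_lead (Hs @ [H])"
  unfolding vertices_can_lead_def
proof
  fix w
  assume w: "w \<in> ears_verts (Hs @ [H])"
  note H = ear_seq_snocD[OF assms(1,2)]
  obtain hs where hs: "H = walk_graph hs" "ear_walk (ears_verts Hs) hs"
    using attached_obtain_ear_walk[OF H(2,4)] .
  show "\<exists>Ks. ear_seq Ks \<and> ears_verts Ks = ears_verts (Hs @ [H]) \<and>
    ears_edges Ks \<subseteq> ears_edges (Hs @ [H]) \<and> w \<in> verts (Ks ! 0)"
  proof (cases "w \<in> ears_verts Hs")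
    case True
    then obtain Ks where Ks: "ear_seq Ks" "ears_verts Ks = ears_verts Hs"
      "ears_edges Ks \<subseteq> ears_edges Hs" "w \<in> verts (Ks ! 0)"
      using assms(3) unfolding vertices_can_lead_def by blast
    have "ear_seq (Ks @ [H])"
      using ear_seq_replace_prefix[OF assms(1,2) Ks(1)] Ks(2,3) H(3) by auto
    then show ?thesis
      using Ks by (intro exI[of _ "Ks @ [H]"]) (auto simp: ear_seq_nth_0_append)
  next
    case False
    then have "w \<in> set hs"
      using w hs by simp
    obtain Ks where "rebuild_leading Hs hs Ks"
      using assms(4) hs H(3) unfolding ears_can_lead_def by auto
    then show ?thesis
      using \<open>w \<in> set hs\<close> hs by (intro exI[of _ Ks]) (auto simp: rebuild_leading_def)
  qed
qed

context
  fixes Hs :: "'a graph list" and hs xs :: "'a list"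
  assumes seq: "ear_seq (Hs @ [walk_graph hs])" and nonempty: "Hs \<noteq> []"
    and leads: "ears_can_lead Hs" and hs_ear: "ear_walk (ears_verts Hs) hs"
    and xs_ear: "ear_walk (ears_verts Hs \<union> set hs) xs"
    and xs_edges: "walk_edges xs \<inter> (ears_edges Hs \<union> walk_edges hs) = {}"
begin

lemma rebuild_leading_snoc_old_ends:
  assumes "hd xs \<in> ears_verts Hs" "last xs \<in> ears_verts Hs"
  shows "\<exists>Ks. rebuild_leading (Hs @ [walk_graph hs]) xs Ks"
proof -
  have ends: "set xs \<inter> (ears_verts Hs \<union> set hs) = {hd xs, last xs}"
    using xs_ear by (simp add: ear_walk_def)
  then have "ear_walk (ears_verts Hs) xs"
    using xs_ear assms by (auto simp: ear_walk_def)
  then obtain Ks where "rebuild_leading Hs xs Ks"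
    using leads xs_edges unfolding ears_can_lead_def by blast
  then have "rebuild_leading (Hs @ [walk_graph hs]) xs (Ks @ [walk_graph hs])"
    by (rule rebuild_leading_append[OF _ seq nonempty]) (use ends assms xs_edges in auto)
  then show ?thesis ..
qed

lemma rebuild_leading_snoc_new_ends:
  assumes "hd xs \<in> set hs" "last xs \<in> set hs" "hd xs \<noteq> last xs"
  shows "\<exists>Ks. rebuild_leading (Hs @ [walk_graph hs]) xs Ks"
proof -
  have "walk_edges hs \<inter> ears_edges Hs = {}"
    using ear_seq_snocD(3)[OF seq nonempty] by simp
  then obtain Ks r where Ks: "ear_seq Ks" "ears_verts Ks = ears_verts Hs \<union> set hs"
    "ears_edges Ks \<subseteq> ears_edges Hs \<union> walk_edges hs" "Ks ! 0 = walk_graph (hs @ r)"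
    "odd_cycle_walk (hs @ r)"
    using leads hs_ear unfolding ears_can_lead_def rebuild_leading_def by blast
  let ?Y = "hs @ r"
  have "Ks = walk_graph ?Y # tl Ks"
    using ear_seq_nonempty[OF Ks(1)] Ks(4) by (cases Ks) auto
  then have seq': "ear_seq ([walk_graph ?Y] @ tl Ks)"
    and verts: "ears_verts Ks = set ?Y \<union> ears_verts (tl Ks)"
    and edges: "ears_edges Ks = walk_edges ?Y \<union> ears_edges (tl Ks)"
    using Ks(1) by (metis append_Cons append_Nil, metis ears_verts_simps(3) verts_walk_graph,
        metis ears_edges_simps(3) edges_walk_graph)
  have "ear_walk (set ?Y) xs" "walk_edges xs \<inter> walk_edges ?Y = {}"
    using xs_ear xs_edges assms(1,2) Ks(2,3) verts edges by (auto simp: ear_walk_def)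
  then obtain As where As: "rebuild_leading [walk_graph ?Y] xs As"
    using rebuild_leading_cycle_ends[OF Ks(5) _ assms(3)] by blast
  have "ears_verts (tl Ks) \<subseteq> ears_verts Hs \<union> set hs"
    using Ks(2) verts by blast
  moreover have "set xs \<inter> (ears_verts Hs \<union> set hs) \<subseteq> set hs"
    using xs_ear assms(1,2) by (simp add: ear_walk_def)
  ultimately have "set xs \<inter> ears_verts (tl Ks) \<subseteq> ears_verts [walk_graph ?Y]"
    by auto
  moreover have "walk_edges xs \<inter> ears_edges (tl Ks) = {}"
    using Ks(3) edges xs_edges by blast
  ultimately have "rebuild_leading ([walk_graph ?Y] @ tl Ks) xs (As @ tl Ks)"
    using rebuild_leading_append[OF As seq'] by blast
  then have "rebuild_leading (Hs @ [walk_graph hs]) xs (As @ tl Ks)"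
    by (rule rebuild_leading_cong) (use Ks(2,3) verts edges in auto)
  then show ?thesis ..
qed

text \<open>If \<open>xs\<close> leaves the last ear \<open>hs = u @ a # v\<close> at an inner vertex \<open>a\<close>, then \<open>u @ xs\<close> is
  an ear of \<open>Hs\<close>; it is moved onto the first cycle, which is then rotated to start with \<open>xs\<close>,
  and the rest \<open>a # v\<close> of \<open>hs\<close> is added back as an ear.\<close>

lemma rebuild_leading_snoc_mixed_ends_even:
  assumes split: "hs = u @ hd xs # v" "even (length u)"
    and ends: "hd xs \<notin> ears_verts Hs" "last xs \<in> ears_verts Hs" "last xs \<notin> set hs"
  shows "\<exists>Ks. rebuild_leading (Hs @ [walk_graph hs]) xs Ks"
proof -
  let ?S = "ears_verts Hs" and ?a = "hd xs"
  have hs: "odd_walk hs" "set hs \<inter> ?S = {hd hs, last hs}"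
    and xs: "odd_walk xs" "set xs \<inter> (?S \<union> set hs) = {?a, last xs}"
    using hs_ear xs_ear by (auto simp: ear_walk_def)
  then have "u \<noteq> []" "v \<noteq> []" "xs \<noteq> []"
    using ends(1) split(1) odd_walk_nonempty by (cases u; cases v rule: rev_cases; auto)+
  note hs_split = odd_walk_split[OF hs(1)[unfolded split(1)] \<open>u \<noteq> []\<close> \<open>v \<noteq> []\<close>]
  note detour = ear_walk_detour[of ?S u ?a v xs]
  have "ear_walk ?S (u @ xs)"
    using detour(1) hs_ear split xs ends \<open>u \<noteq> []\<close> \<open>v \<noteq> []\<close> by simp
  moreover have edges_X: "walk_edges (u @ xs) = walk_edges (u @ [?a]) \<union> walk_edges xs"
    using walk_edges_split[of u ?a "tl xs"] \<open>xs \<noteq> []\<close> by simp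
  moreover have edges_hs: "walk_edges hs = walk_edges (u @ [?a]) \<union> walk_edges (?a # v)"
    using split(1) walk_edges_split by metis
  moreover have "walk_edges hs \<inter> ears_edges Hs = {}"
    using ear_seq_snocD(3)[OF seq nonempty] by simp
  ultimately obtain Ks0 where Ks0: "rebuild_leading Hs (u @ xs) Ks0"
    using leads xs_edges unfolding ears_can_lead_def by blast
  then obtain r where r: "Ks0 ! 0 = walk_graph (xs @ r)" "odd_cycle_walk (xs @ r)"
    using rebuild_leading_first_cycle_suffix \<open>u \<noteq> []\<close> \<open>xs \<noteq> []\<close> by blast
  have Ks0_verts: "ears_verts Ks0 = ?S \<union> set u \<union> set xs"
    and Ks0_edges: "ears_edges Ks0 \<subseteq> ears_edges Hs \<union> walk_edges (u @ [?a]) \<union> walk_edges xs"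
    using Ks0 edges_X by (auto simp: rebuild_leading_def)
  have "set v \<inter> (?S \<union> set u \<union> set xs) \<subseteq> {last v}"
    using detour(2) hs_ear split xs ends \<open>u \<noteq> []\<close> \<open>v \<noteq> []\<close> by simp
  then have R_verts: "set (?a # v) \<inter> ears_verts Ks0 = {hd (?a # v), last (?a # v)}"
    using Ks0_verts hs(2) split(1) \<open>v \<noteq> []\<close> \<open>xs \<noteq> []\<close> by auto
  have R_length: "2 \<le> length (?a # v)" "even (length (?a # v))"
    using hs(1) split \<open>v \<noteq> []\<close> unfolding odd_walk_def by (auto simp: Suc_le_eq)
  have R_edges: "walk_edges (?a # v) \<inter> ears_edges Ks0 = {}"
    using Ks0_edges edges_hs hs_split(4) xs_edges \<open>walk_edges hs \<inter> ears_edges Hs = {}\<close> by blast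
  have "ear_seq Ks0"
    using Ks0 by (simp add: rebuild_leading_def)
  then obtain Ks where Ks: "ear_seq Ks" "Ks ! 0 = Ks0 ! 0"
    "ears_verts Ks = ears_verts Ks0 \<union> set (?a # v)"
    "ears_edges Ks \<subseteq> ears_edges Ks0 \<union> walk_edges (?a # v)"
    using ear_seq_snoc_optional_ear[OF _ hs_split(2) R_length R_verts R_edges] by blast
  then have "rebuild_leading (Hs @ [walk_graph hs]) xs Ks"
    using r Ks0_verts Ks0_edges edges_hs split(1) \<open>xs \<noteq> []\<close> unfolding rebuild_leading_def
    by auto
  then show ?thesis ..
qed

end

lemma rebuild_leading_snoc_mixed_ends:
  assumes "ear_seq (Hs @ [walk_graph hs])" "Hs \<noteq> []" "ears_can_lead Hs"
    "ear_walk (ears_verts Hs) hs" "ear_walk (ears_verts Hs \<union> set hs) xs"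
    "walk_edges xs \<inter> (ears_edges Hs \<union> walk_edges hs) = {}"
    and ends: "hd xs \<in> set hs" "hd xs \<notin> ears_verts Hs" "last xs \<in> ears_verts Hs" "last xs \<notin> set hs"
  shows "\<exists>Ks. rebuild_leading (Hs @ [walk_graph hs]) xs Ks"
proof -
  obtain u v where split: "hs = u @ hd xs # v"
    using ends(1) by (meson split_list)
  show ?thesis
  proof (cases "even (length u)")
    case True
    show ?thesis
      using rebuild_leading_snoc_mixed_ends_even[OF assms(1-6) split True ends(2-4)] .
  next
    case False
    have "even (length hs)"
      using assms(4) by (simp add: ear_walk_def odd_walk_def)
    then have rev_split: "rev hs = rev v @ hd xs # rev u" "even (length (rev v))"
      using split False by simp_all
    have "\<exists>Ks. rebuild_leading (Hs @ [walk_graph (rev hs)]) xs Ks"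
      by (rule rebuild_leading_snoc_mixed_ends_even[OF _ assms(2,3) ear_walk_rev[OF assms(4)] _ _
            rev_split ends(2,3)]) (use assms(1,5,6) ends(4) in simp_all)
    then show ?thesis
      by simp
  qed
qed

lemma rebuild_leading_snoc_entering_ends:
  assumes "ear_seq (Hs @ [walk_graph hs])" "Hs \<noteq> []" "ears_can_lead Hs"
    "ear_walk (ears_verts Hs) hs" "ear_walk (ears_verts Hs \<union> set hs) xs"
    "walk_edges xs \<inter> (ears_edges Hs \<union> walk_edges hs) = {}"
    and ends: "last xs \<in> set hs" "last xs \<notin> ears_verts Hs" "hd xs \<in> ears_verts Hs" "hd xs \<notin> set hs"
  shows "\<exists>Ks. rebuild_leading (Hs @ [walk_graph hs]) xs Ks"
proof -
  have "xs \<noteq> []" "hd xs \<noteq> last xs"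
    using assms(5) ends by (auto simp: ear_walk_def odd_walk_def)
  moreover obtain Ks where "rebuild_leading (Hs @ [walk_graph hs]) (rev xs) Ks"
    using rebuild_leading_snoc_mixed_ends[OF assms(1-4) ear_walk_rev[OF assms(5)]] assms(6) ends
    by (auto simp: hd_rev last_rev)
  ultimately show ?thesis
    using rebuild_leading_rev by blast
qed

lemma ears_can_lead_snoc:
  assumes "ear_seq (Hs @ [H])" "Hs \<noteq> []" "vertices_can_lead Hs" "ears_can_lead Hs"
  shows "ears_can_lead (Hs @ [H])"
  unfolding ears_can_lead_def
proof (intro allI impI)
  fix xs
  assume xs_ear: "ear_walk (ears_verts (Hs @ [H])) xs"
    and xs_edges: "walk_edges xs \<inter> ears_edges (Hs @ [H]) = {}"
  note H = ear_seq_snocD[OF assms(1,2)]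
  obtain hs where hs: "H = walk_graph hs" "ear_walk (ears_verts Hs) hs"
    using attached_obtain_ear_walk[OF H(2,4)] .
  then have ctx: "ear_seq (Hs @ [walk_graph hs])" "ear_walk (ears_verts Hs \<union> set hs) xs"
    "walk_edges xs \<inter> (ears_edges Hs \<union> walk_edges hs) = {}"
    using assms(1) xs_ear xs_edges by simp_all
  then have "hd xs \<in> ears_verts Hs \<union> set hs" "last xs \<in> ears_verts Hs \<union> set hs"
    by (auto simp: ear_walk_def)
  then consider (closed) "hd xs = last xs"
    | (old) "hd xs \<in> ears_verts Hs" "last xs \<in> ears_verts Hs"
    | (new) "hd xs \<noteq> last xs" "hd xs \<in> set hs" "last xs \<in> set hs"
    | (leaving) "hd xs \<in> set hs" "hd xs \<notin> ears_verts Hs" "last xs \<in> ears_verts Hs" "last xs \<notin> set hs"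
    | (entering) "last xs \<in> set hs" "last xs \<notin> ears_verts Hs" "hd xs \<in> ears_verts Hs" "hd xs \<notin> set hs"
    by blast
  then show "\<exists>Ks. rebuild_leading (Hs @ [H]) xs Ks"
  proof cases
    case closed
    then show ?thesis
      using rebuild_leading_closed_ear[OF vertices_can_lead_snoc[OF assms] xs_ear _ xs_edges] by blast
  next
    case old
    then show ?thesis
      using rebuild_leading_snoc_old_ends[OF ctx(1) assms(2,4) hs(2) ctx(2,3)] hs(1) by blast
  next
    case new
    then show ?thesis
      using rebuild_leading_snoc_new_ends[OF ctx(1) assms(2,4) hs(2) ctx(2,3)] hs(1) by blast
  next
    case leaving
    then show ?thesis
      using rebuild_leading_snoc_mixed_ends[OF ctx(1) assms(2,4) hs(2) ctx(2,3)] hs(1) by blast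
  next
    case entering
    then show ?thesis
      using rebuild_leading_snoc_entering_ends[OF ctx(1) assms(2,4) hs(2) ctx(2,3)] hs(1) by blast
  qed
qed

lemma ear_seq_leads:
  assumes "ear_seq Hs"
  shows "vertices_can_lead Hs \<and> ears_can_lead Hs"
  using assms
proof (induction rule: ear_seq.induct)
  case (first H)
  then show ?case
    using single_cycle_leads by blast
next
  case (snoc Hs H)
  then have "ear_seq (Hs @ [H])"
    using ear_seq.snoc by blast
  then show ?case
    using vertices_can_lead_snoc ears_can_lead_snoc snoc.IH ear_seq_nonempty[OF snoc.hyps(1)] by blast
qed

section \<open>Odd ear decompositions\<close>

lemma prev_verts_eq_ears_verts_take: "k \<le> length Hs \<Longrightarrow> prev_verts Hs k = ears_verts (take k Hs)"
  unfolding prev_verts_def ears_verts_def by (simp add: nth_image[symmetric] image_image atLeast0LessThan)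

lemma ears_edges_take: "k \<le> length Hs \<Longrightarrow> ears_edges (take k Hs) = (\<Union>j<k. edges (Hs ! j))"
  unfolding ears_edges_def by (simp add: nth_image[symmetric] image_image atLeast0LessThan)

lemma odd_ear_decomposition_ears:
  assumes "odd_ear_decomposition G Hs"
  shows "ears_verts Hs = verts G" "ears_edges Hs \<subseteq> edges G"
proof -
  show "ears_verts Hs = verts G"
    using assms prev_verts_eq_ears_verts_take[of "length Hs" Hs]
    by (simp add: odd_ear_decomposition_def prev_verts_def)
  have "\<forall>K\<in>set Hs. subgraph K G"
    using assms unfolding odd_ear_decomposition_def by (metis in_set_conv_nth)
  then show "ears_edges Hs \<subseteq> edges G"
    unfolding ears_edges_def subgraph_def by blast
qed

lemma odd_ear_decomposition_imp_ear_seq: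
  assumes oed: "odd_ear_decomposition G Hs"
  shows "ear_seq Hs"
proof -
  have "ear_seq (take (Suc k) Hs)" if "k < length Hs" for k
    using that
  proof (induction k)
    case 0
    then show ?case
      using oed ear_seq.first[of "Hs ! 0"]
      by (auto simp: odd_ear_decomposition_def odd_graph_def subgraph_def take_Suc_conv_app_nth)
  next
    case (Suc k)
    have "odd_graph (Hs ! Suc k)"
      using oed Suc.prems by (auto simp: odd_ear_decomposition_def odd_graph_def subgraph_def)
    moreover have "edges (Hs ! Suc k) \<inter> edges (Hs ! j) = {}" if "j < Suc k" for j
      using oed Suc.prems that unfolding odd_ear_decomposition_def by simp
    then have "edges (Hs ! Suc k) \<inter> ears_edges (take (Suc k) Hs) = {}"
      using Suc.prems ears_edges_take[of "Suc k" Hs] by auto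
    moreover have "attached (ears_verts (take (Suc k) Hs)) (Hs ! Suc k)"
      using oed Suc.prems prev_verts_eq_ears_verts_take[of "Suc k" Hs]
      unfolding odd_ear_decomposition_def attached_def by auto
    ultimately show ?case
      using ear_seq.snoc Suc by (simp add: take_Suc_conv_app_nth[of "Suc k"])
  qed
  moreover have "Hs \<noteq> []"
    using oed by (simp add: odd_ear_decomposition_def)
  ultimately show ?thesis
    by (metis Suc_pred length_greater_0_conv lessI take_all_iff order.refl)
qed

lemma ear_seq_edges_pairwise_disjoint:
  assumes "ear_seq Ks" "i < length Ks" "j < length Ks" "i \<noteq> j"
  shows "edges (Ks ! i) \<inter> edges (Ks ! j) = {}"
proof -
  have "edges (Ks ! p) \<inter> edges (Ks ! q) = {}" if "p < q" "q < length Ks" for p q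
  proof -
    have "ears_edges (take q Ks) \<inter> ears_edges (drop q Ks) = {}"
      using ear_seq_edges_disjoint[of "take q Ks" "drop q Ks"] assms(1) by simp
    moreover have "edges (Ks ! p) \<subseteq> ears_edges (take q Ks)" "edges (Ks ! q) \<subseteq> ears_edges (drop q Ks)"
      using that ears_edges_take[of q Ks] by (auto simp: ears_edges_def Cons_nth_drop_Suc[symmetric])
    ultimately show ?thesis
      by blast
  qed
  then show ?thesis
    using assms(2-4) by (metis Int_commute linorder_neqE_nat)
qed

lemma ear_seq_nth_attached:
  assumes "ear_seq Ks" "1 \<le> i" "i < length Ks"
  shows "attached (prev_verts Ks i) (Ks ! i)"
proof -
  have "ear_seq ((take i Ks @ [Ks ! i]) @ drop (Suc i) Ks)"
    using assms(1) id_take_nth_drop[OF assms(3)] by (metis append.assoc append_Cons append_Nil)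
  then have "ear_seq (take i Ks @ [Ks ! i])"
    by (rule ear_seq_prefix) simp
  moreover have "take i Ks \<noteq> []"
    using assms(2,3) by auto
  ultimately show ?thesis
    using ear_seq_snocD(4) assms(3) prev_verts_eq_ears_verts_take[of i Ks] by (simp del: take_eq_Nil)
qed

lemma ear_seq_imp_odd_ear_decomposition:
  assumes "ear_seq Ks" "ears_verts Ks = verts G" "ears_edges Ks \<subseteq> edges G"
  shows "odd_ear_decomposition G Ks"
proof -
  have "odd_graph K \<and> subgraph K G" if "K \<in> set Ks" for K
    using that ear_seq_odd_graph[OF assms(1)] assms(2,3) unfolding ears_verts_def ears_edges_def
    by (auto simp: subgraph_def odd_graph_def)
  then have "\<forall>i<length Ks. subgraph (Ks ! i) G \<and> odd (card (edges (Ks ! i))) \<and> 3 \<le> card (edges (Ks ! i))"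
    by (simp add: odd_graph_def)
  moreover have "verts G = (\<Union>i<length Ks. verts (Ks ! i))"
    using assms(2) prev_verts_eq_ears_verts_take[of "length Ks" Ks] by (simp add: prev_verts_def)
  ultimately show ?thesis
    unfolding odd_ear_decomposition_def
    using ear_seq_nonempty[OF assms(1)] ear_seq_first[OF assms(1)]
      ear_seq_edges_pairwise_disjoint[OF assms(1)] ear_seq_nth_attached[OF assms(1)]
    by (simp add: attached_def)
qed

lemma odd_ear_decomposition_rebuild_leading:
  assumes oed: "odd_ear_decomposition G Hs" and i: "1 \<le> i" "i < length Hs"
  obtains hs Ks where "Hs ! i = walk_graph hs" "ear_walk (prev_verts Hs i) hs"
    "rebuild_leading Hs hs Ks"
proof -
  let ?P = "take i Hs" and ?H = "Hs ! i" and ?L = "drop (Suc i) Hs"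
  have Hs: "Hs = (?P @ [?H]) @ ?L"
    using id_take_nth_drop[OF i(2)] by (metis append.assoc append_Cons append_Nil)
  have seq: "ear_seq ((?P @ [?H]) @ ?L)"
    using odd_ear_decomposition_imp_ear_seq[OF oed] Hs by metis
  moreover have "?P \<noteq> []"
    using i by auto
  ultimately have P: "ear_seq ?P" "odd_graph ?H" "edges ?H \<inter> ears_edges ?P = {}"
    "attached (ears_verts ?P) ?H"
    using ear_seq_snocD[of ?P ?H] ear_seq_prefix[of "?P @ [?H]" ?L] by auto
  obtain hs where hs: "?H = walk_graph hs" "ear_walk (ears_verts ?P) hs"
    using attached_obtain_ear_walk[OF P(2,4)] .
  then obtain Ks where "rebuild_leading ?P hs Ks"
    using ear_seq_leads[OF P(1)] P(3) unfolding ears_can_lead_def by auto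
  then have "rebuild_leading (?P @ [?H]) hs Ks"
    by (rule rebuild_leading_cong) (use hs in auto)
  then have "rebuild_leading ((?P @ [?H]) @ ?L) hs (Ks @ ?L)"
    by (rule rebuild_leading_append[OF _ seq]) (use hs ear_seq_edges_disjoint[OF seq] in auto)
  then have "rebuild_leading Hs hs (Ks @ ?L)"
    unfolding Hs[symmetric] .
  then show thesis
    using that hs prev_verts_eq_ears_verts_take[of i Hs] i(2) by simp
qed

lemma odd_ear_decomposition_larger_first_cycle:
  assumes oed: "odd_ear_decomposition G Hs" and i: "1 \<le> i" "i < length Hs"
  obtains Ks where "odd_ear_decomposition G Ks"
    "card (verts (Hs ! i) - prev_verts Hs i) < card (verts (Ks ! 0))"
proof -
  obtain hs Ks where hs: "Hs ! i = walk_graph hs" "ear_walk (prev_verts Hs i) hs"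
    and Ks: "rebuild_leading Hs hs Ks"
    using odd_ear_decomposition_rebuild_leading[OF assms] .
  have "set hs \<subseteq> ears_verts Hs" "walk_edges hs \<subseteq> ears_edges Hs"
    using hs(1) i(2) nth_mem[OF i(2)] unfolding ears_verts_def ears_edges_def
    by (metis UN_upper verts_walk_graph, metis UN_upper edges_walk_graph)
  moreover obtain r where "ear_seq Ks" "ears_verts Ks = ears_verts Hs \<union> set hs"
    "ears_edges Ks \<subseteq> ears_edges Hs \<union> walk_edges hs" "Ks ! 0 = walk_graph (hs @ r)"
    using Ks unfolding rebuild_leading_def by blast
  ultimately have "odd_ear_decomposition G Ks" "Ks ! 0 = walk_graph (hs @ r)"
    using odd_ear_decomposition_ears[OF oed] ear_seq_imp_odd_ear_decomposition[of Ks G]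
    by (simp_all add: Un_absorb2 subset_trans)
  moreover have "hd hs \<in> prev_verts Hs i" "hd hs \<in> set hs"
    using hs(2) odd_walk_nonempty by (auto simp: ear_walk_def)
  then have "card (set hs - prev_verts Hs i) < card (set hs)"
    by (intro psubset_card_mono) auto
  then have "card (verts (Hs ! i) - prev_verts Hs i) < card (verts (Ks ! 0))"
    using hs(1) \<open>Ks ! 0 = walk_graph (hs @ r)\<close> card_mono[of "set (hs @ r)" "set hs"] by simp
  ultimately show thesis
    using that by blast
qed

lemma vert_seq_lexord_first:
  assumes "Hs \<noteq> []" "Ks \<noteq> []" "card (verts (Hs ! 0)) < card (verts (Ks ! 0))"
  shows "(vert_seq Hs, vert_seq Ks) \<in> lexord {(a, b). a < b}"
  using assms by (cases Hs; cases Ks) (auto simp: vert_seq_def)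

theorem lemma3p1:
  fixes G :: "'a graph" and Hs :: "'a graph list" and l :: nat
  assumes "graph G"
    and "hypomatchable G"
    and "card (verts G) \<ge> 3"
    and "lex_max_oed G Hs"
    and "card (verts (Hs ! 0)) = 2 * l + 1"
  shows "\<forall>i. 1 \<le> i \<and> i < length Hs \<longrightarrow>
           card (verts (Hs ! i) - prev_verts Hs i) \<le> 2 * l"
proof (intro allI impI)
  fix i
  assume i: "1 \<le> i \<and> i < length Hs"
  have oed: "odd_ear_decomposition G Hs"
    using assms(4) by (simp add: lex_max_oed_def)
  then obtain Ks where Ks: "odd_ear_decomposition G Ks"
    "card (verts (Hs ! i) - prev_verts Hs i) < card (verts (Ks ! 0))"
    using odd_ear_decomposition_larger_first_cycle i by blast
  have "Hs \<noteq> []" "Ks \<noteq> []"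
    using oed Ks(1) by (simp_all add: odd_ear_decomposition_def)
  moreover have "(vert_seq Hs, vert_seq Ks) \<notin> lexord {(a, b). a < b}"
    using assms(4) Ks(1) by (simp add: lex_max_oed_def)
  ultimately have "\<not> card (verts (Hs ! 0)) < card (verts (Ks ! 0))"
    using vert_seq_lexord_first by blast
  then show "card (verts (Hs ! i) - prev_verts Hs i) \<le> 2 * l"
    using Ks(2) assms(5) by linarith
qed

end
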